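(* Let $v_1,\dots,v_n\in\mathbb{R}^d$, let $Z\in\mathbb{R}^{d\times d}$ be symmetric with $Z\succeq\frac14I$, let $\alpha=8\sqrt d$, and let $A=(\alpha Z-\ell I)^{-2}$ where $\ell\in\mathbb{R}$ is the unique scalar such that $\alpha Z-\ell I\succ0$ and $\operatorname{tr}(A)=1$. Then for every $1\le i\le n$, \[ \langle v_iv_i^\top,Z^{-1}\rangle\le\alpha\langle v_iv_i^\top,A^{1/2}\rangle\le\alpha\lambda_{\min}(Z)\langle v_iv_i^\top,Z^{-1}\rangle. \]
   Context: $\langle M,N\rangle=\operatorname{tr}(MN)$ for symmetric matrices. *)

theory Defs
  imports "HOL-Analysis.Analysis"
begin

text \<open>Real d x d matrices are modelled as real^'d^'d; d = CARD('d).\<close>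

definition symmetric_mat :: "real^'d^'d \<Rightarrow> bool" where
  "symmetric_mat M \<longleftrightarrow> transpose M = M"

definition psd :: "real^'d^'d \<Rightarrow> bool" where
  "psd M \<longleftrightarrow> symmetric_mat M \<and> (\<forall>x. x \<bullet> (M *v x) \<ge> 0)"

definition pd :: "real^'d^'d \<Rightarrow> bool" where
  "pd M \<longleftrightarrow> symmetric_mat M \<and> (\<forall>x. x \<noteq> 0 \<longrightarrow> x \<bullet> (M *v x) > 0)"

definition loewner_ge :: "real^'d^'d \<Rightarrow> real^'d^'d \<Rightarrow> bool" where
  "loewner_ge M N \<longleftrightarrow> psd (M - N)"

definition frob :: "real^'d^'d \<Rightarrow> real^'d^'d \<Rightarrow> real" where
  "frob M N = trace (M ** N)"

definition outer :: "real^'d \<Rightarrow> real^'d \<Rightarrow> real^'d^'d" where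
  "outer u w = (\<chi> i j. u $ i * w $ j)"

definition psd_sqrt :: "real^'d^'d \<Rightarrow> real^'d^'d" where
  "psd_sqrt A = (THE B. psd B \<and> B ** B = A)"

definition eigenvalues_mat :: "real^'d^'d \<Rightarrow> real set" where
  "eigenvalues_mat M = {c. \<exists>x. x \<noteq> 0 \<and> M *v x = c *\<^sub>R x}"

definition lambda_min :: "real^'d^'d \<Rightarrow> real" where
  "lambda_min M = Min (eigenvalues_mat M)"

end

theory Submission
  imports Defs
begin

(*
  Put M = \<alpha>Z - lI and m = \<lambda>_min(M) = \<alpha>\<lambda>_min(Z) - l, so that A = M^-2. The largest eigenvalue
  1/m of M^-1 gives m^-2 \<le> tr(M^-2), and every column of M^-1 has norm at most 1/m, so
  tr(M^-2) \<le> d m^-2; with tr(M^-2) = 1 this forces 1 \<le> m \<le> sqrt d. Together with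
  \<lambda>_min(Z) \<ge> 1/4 and \<alpha> = 8 sqrt d this yields l \<ge> 0 and \<alpha>\<lambda>_min(Z) \<ge> 1, i.e. the Loewner
  inequalities \<alpha>Z \<succeq> M and \<lambda>_min(Z) M \<succeq> Z. Inversion is antitone on positive definite
  matrices, because x^T P^-1 x = max_y (2 x^T y - y^T P y); hence (\<alpha>Z)^-1 \<preceq> M^-1 \<preceq> \<lambda>_min(Z) Z^-1.
  Finally A^(1/2) = M^-1 by uniqueness of positive semidefinite square roots, and pairing with
  v_i v_i^T gives the two inequalities.
*)

lemma symmetric_mat_inner_commute:
  fixes M :: "real^'d^'d"
  assumes "symmetric_mat M"
  shows "(M *v x) \<bullet> y = x \<bullet> (M *v y)"
proof -
  have "M *v x = x v* M"
    using assms vector_transpose_matrix[of x M] unfolding symmetric_mat_def by simp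
  then show ?thesis by (simp add: dot_lmul_matrix)
qed

lemma symmetric_mat_nth:
  assumes "symmetric_mat N"
  shows "N $ i $ j = N $ j $ i"
proof -
  have "transpose N $ i $ j = N $ i $ j" using assms unfolding symmetric_mat_def by simp
  then show ?thesis by (simp add: transpose_def)
qed

lemma symmetric_mat_add: "symmetric_mat A \<Longrightarrow> symmetric_mat B \<Longrightarrow> symmetric_mat (A + B)"
  unfolding symmetric_mat_def by (simp add: transpose_def vec_eq_iff)

lemma symmetric_mat_diff: "symmetric_mat A \<Longrightarrow> symmetric_mat B \<Longrightarrow> symmetric_mat (A - B)"
  unfolding symmetric_mat_def by (simp add: transpose_def vec_eq_iff)

lemma symmetric_mat_scaleR: "symmetric_mat A \<Longrightarrow> symmetric_mat (c *\<^sub>R A)"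
  unfolding symmetric_mat_def by (simp add: transpose_scalar)

lemma symmetric_mat_uminus: "symmetric_mat A \<Longrightarrow> symmetric_mat (- A)"
  unfolding symmetric_mat_def by (simp add: transpose_def vec_eq_iff)

lemma symmetric_mat_mat: "symmetric_mat (mat c)"
  unfolding symmetric_mat_def by simp

lemma scaleR_mat_vector: "((c::real) *\<^sub>R mat 1) *v (x :: real^'n) = c *\<^sub>R x"
  by (subst scaleR_matrix_vector_assoc[symmetric]) simp

lemma loewner_ge_iff:
  "loewner_ge M N \<longleftrightarrow> symmetric_mat (M - N) \<and> (\<forall>x. x \<bullet> (N *v x) \<le> x \<bullet> (M *v x))"
  unfolding loewner_ge_def psd_def by (simp add: matrix_vector_mult_diff_rdistrib inner_diff_right)

lemma psd_quadratic_form_eq_0_imp: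
  fixes P :: "real^'d^'d"
  assumes "psd P" "x \<bullet> (P *v x) = 0"
  shows "P *v x = 0"
proof (rule ccontr)
  assume "P *v x \<noteq> 0"
  define y where "y = P *v x"
  define a where "a = y \<bullet> y"
  define b where "b = y \<bullet> (P *v y)"
  have P: "symmetric_mat P" "\<And>z. z \<bullet> (P *v z) \<ge> 0" using assms(1) unfolding psd_def by auto
  have a: "a > 0" using \<open>P *v x \<noteq> 0\<close> unfolding a_def y_def by simp
  have b: "b \<ge> 0" unfolding b_def by (rule P(2))
  define t where "t = a / (b + 1)"
  have t: "t > 0" using a b unfolding t_def by simp
  \<comment> \<open>moving from x a little in the direction -Px makes the form negative\<close>
  have "0 \<le> (x - t *\<^sub>R y) \<bullet> (P *v (x - t *\<^sub>R y))" by (rule P(2))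
  also have "\<dots> = t * (t * b - 2 * a)"
    using assms(2) symmetric_mat_inner_commute[OF P(1), of x y]
    by (simp add: algebra_simps inner_diff_left inner_diff_right a_def b_def y_def inner_commute)
  finally have "0 \<le> t * b - 2 * a"
    using t by (simp add: zero_le_mult_iff)
  moreover have "t * b < a" unfolding t_def using a b by (simp add: field_simps)
  ultimately show False using a by linarith
qed

lemma pd_imp_psd:
  fixes M :: "real^'d^'d"
  assumes "pd M"
  shows "psd M"
  unfolding psd_def
proof (intro conjI allI)
  show "symmetric_mat M" using assms unfolding pd_def by simp
  show "0 \<le> x \<bullet> (M *v x)" for x
    using assms unfolding pd_def by (cases "x = 0") (auto intro: less_imp_le)
qed

lemma symmetric_mat_rayleigh_min:
  fixes D :: "real^'d^'d"
  assumes "symmetric_mat D"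
  shows "\<exists>u. norm u = 1 \<and> D *v u = (u \<bullet> (D *v u)) *\<^sub>R u
    \<and> (\<forall>x. (u \<bullet> (D *v u)) * (x \<bullet> x) \<le> x \<bullet> (D *v x))"
proof -
  have cont: "continuous_on (sphere 0 1) (\<lambda>x::real^'d. x \<bullet> (D *v x))"
    by (intro continuous_intros linear_continuous_on bounded_linear_intros) auto
  have "sphere (0::real^'d) 1 \<noteq> {}" by simp
  then obtain u where u: "u \<in> sphere 0 1"
    and umin: "\<And>y. y \<in> sphere 0 1 \<Longrightarrow> u \<bullet> (D *v u) \<le> y \<bullet> (D *v y)"
    using continuous_attains_inf[OF compact_sphere _ cont] by blast
  define \<mu> where "\<mu> = u \<bullet> (D *v u)"
  have min: "\<mu> * (x \<bullet> x) \<le> x \<bullet> (D *v x)" for x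
  proof (cases "x = 0")
    case False
    define y where "y = (1 / norm x) *\<^sub>R x"
    have "y \<in> sphere 0 1" using False unfolding y_def by simp
    then have "\<mu> \<le> y \<bullet> (D *v y)" using umin unfolding \<mu>_def by blast
    also have "y \<bullet> (D *v y) = (x \<bullet> (D *v x)) / (x \<bullet> x)"
      unfolding y_def by (simp add: matrix_vector_mult_scaleR power2_norm_eq_inner[symmetric]
          power2_eq_square divide_simps)
    finally show ?thesis using False by (simp add: divide_simps mult.commute)
  qed simp
  have "norm u = 1" using u by simp
  have "psd (D - \<mu> *\<^sub>R mat 1)"
    using min unfolding psd_def
    by (auto intro: symmetric_mat_diff symmetric_mat_scaleR symmetric_mat_mat assms
        simp: matrix_vector_mult_diff_rdistrib scaleR_mat_vector inner_diff_right)
  moreover have "u \<bullet> ((D - \<mu> *\<^sub>R mat 1) *v u) = 0"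
    using \<open>norm u = 1\<close> by (simp add: matrix_vector_mult_diff_rdistrib scaleR_mat_vector
        inner_diff_right \<mu>_def norm_eq_1)
  ultimately have "D *v u = \<mu> *\<^sub>R u"
    by (auto dest: psd_quadratic_form_eq_0_imp simp: matrix_vector_mult_diff_rdistrib scaleR_mat_vector)
  with \<open>norm u = 1\<close> min show ?thesis unfolding \<mu>_def by blast
qed

lemma finite_eigenvalues_mat:
  fixes D :: "real^'d^'d"
  assumes "symmetric_mat D"
  shows "finite (eigenvalues_mat D)"
proof -
  define f where "f c = (SOME x. x \<noteq> 0 \<and> D *v x = c *\<^sub>R x)" for c
  have f: "f c \<noteq> 0 \<and> D *v f c = c *\<^sub>R f c" if "c \<in> eigenvalues_mat D" for c
    using someI_ex[of "\<lambda>x. x \<noteq> 0 \<and> D *v x = c *\<^sub>R x"] that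
    unfolding f_def eigenvalues_mat_def by blast
  have inj: "inj_on f (eigenvalues_mat D)"
    by (rule inj_onI) (metis f scaleR_cancel_right)
  \<comment> \<open>eigenvectors of distinct eigenvalues of a symmetric matrix are orthogonal\<close>
  have "pairwise orthogonal (f ` eigenvalues_mat D)"
  proof (clarsimp simp: pairwise_def orthogonal_def)
    fix c c' assume c: "c \<in> eigenvalues_mat D" "c' \<in> eigenvalues_mat D" "f c \<noteq> f c'"
    have "c * (f c \<bullet> f c') = c' * (f c \<bullet> f c')"
      using symmetric_mat_inner_commute[OF assms, of "f c" "f c'"] f[OF c(1)] f[OF c(2)] by simp
    then show "f c \<bullet> f c' = 0" using c by auto
  qed
  then have "finite (f ` eigenvalues_mat D)"
    by (rule pairwise_orthogonal_imp_finite)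
  then show ?thesis
    using inj by (rule finite_imageD)
qed

lemma lambda_min_eqI:
  fixes D :: "real^'d^'d"
  assumes "symmetric_mat D" "u \<noteq> 0" "D *v u = c *\<^sub>R u" "\<And>x. c * (x \<bullet> x) \<le> x \<bullet> (D *v x)"
  shows "lambda_min D = c"
  unfolding lambda_min_def
proof (rule Min_eqI[OF finite_eigenvalues_mat[OF assms(1)]])
  show "c \<in> eigenvalues_mat D" using assms(2,3) unfolding eigenvalues_mat_def by blast
  fix c' assume "c' \<in> eigenvalues_mat D"
  then obtain x where "x \<noteq> 0" "D *v x = c' *\<^sub>R x" unfolding eigenvalues_mat_def by blast
  then have "c * (x \<bullet> x) \<le> c' * (x \<bullet> x)" "x \<bullet> x > 0"
    using assms(4)[of x] by simp_all
  then show "c \<le> c'" by (rule mult_right_le_imp_le)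
qed

lemma lambda_min_rayleigh:
  fixes D :: "real^'d^'d"
  assumes "symmetric_mat D"
  shows "\<exists>u. norm u = 1 \<and> D *v u = lambda_min D *\<^sub>R u"
    and "lambda_min D * (x \<bullet> x) \<le> x \<bullet> (D *v x)"
proof -
  obtain u where u: "norm u = 1" "D *v u = (u \<bullet> (D *v u)) *\<^sub>R u"
    and min: "\<And>x. (u \<bullet> (D *v u)) * (x \<bullet> x) \<le> x \<bullet> (D *v x)"
    using symmetric_mat_rayleigh_min[OF assms] by blast
  have "u \<noteq> 0" using u(1) by auto
  then have eq: "lambda_min D = u \<bullet> (D *v u)"
    using u(2) min by (rule lambda_min_eqI[OF assms])
  show "\<exists>u. norm u = 1 \<and> D *v u = lambda_min D *\<^sub>R u"
    using u(1) u(2)[folded eq] by blast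
  show "lambda_min D * (x \<bullet> x) \<le> x \<bullet> (D *v x)"
    using min[folded eq] .
qed

lemma pd_iff_lambda_min_pos:
  fixes M :: "real^'d^'d"
  shows "pd M \<longleftrightarrow> symmetric_mat M \<and> 0 < lambda_min M"
proof
  assume M: "pd M"
  then have "symmetric_mat M" unfolding pd_def by simp
  moreover obtain u where "norm u = 1" "M *v u = lambda_min M *\<^sub>R u"
    using lambda_min_rayleigh(1)[OF calculation] by blast
  moreover have "u \<noteq> 0" using \<open>norm u = 1\<close> by auto
  ultimately show "symmetric_mat M \<and> 0 < lambda_min M"
    using M unfolding pd_def by (force simp: norm_eq_1)
next
  assume M: "symmetric_mat M \<and> 0 < lambda_min M"
  have "0 < x \<bullet> (M *v x)" if "x \<noteq> 0" for x
    using lambda_min_rayleigh(2)[of M x] M that by (meson inner_gt_zero_iff less_le_trans mult_pos_pos)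
  with M show "pd M" unfolding pd_def by blast
qed

lemma lambda_min_ge_if_loewner_ge_scalar:
  fixes Z :: "real^'d^'d"
  assumes "symmetric_mat Z" "loewner_ge Z (c *\<^sub>R mat 1)"
  shows "c \<le> lambda_min Z"
proof -
  obtain u where "norm u = 1" "Z *v u = lambda_min Z *\<^sub>R u"
    using lambda_min_rayleigh(1)[OF assms(1)] by blast
  moreover have "c * (u \<bullet> u) \<le> u \<bullet> (Z *v u)"
    using assms(2) unfolding loewner_ge_iff by (simp add: scaleR_mat_vector)
  ultimately show ?thesis by (simp add: norm_eq_1)
qed

lemma lambda_min_affine:
  fixes Z :: "real^'d^'d"
  assumes "symmetric_mat Z" "0 < a"
  shows "lambda_min (a *\<^sub>R Z - l *\<^sub>R mat 1) = a * lambda_min Z - l"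
proof -
  have Mv: "(a *\<^sub>R Z - l *\<^sub>R mat 1) *v x = a *\<^sub>R (Z *v x) - l *\<^sub>R x" for x
    by (simp add: matrix_vector_mult_diff_rdistrib scaleR_mat_vector scaleR_matrix_vector_assoc)
  obtain u where "norm u = 1" "Z *v u = lambda_min Z *\<^sub>R u"
    using lambda_min_rayleigh(1)[OF assms(1)] by blast
  show ?thesis
  proof (rule lambda_min_eqI)
    show "symmetric_mat (a *\<^sub>R Z - l *\<^sub>R mat 1)"
      by (intro symmetric_mat_diff symmetric_mat_scaleR symmetric_mat_mat assms(1))
    show "u \<noteq> 0" using \<open>norm u = 1\<close> by auto
    show "(a *\<^sub>R Z - l *\<^sub>R mat 1) *v u = (a * lambda_min Z - l) *\<^sub>R u"
      using \<open>Z *v u = lambda_min Z *\<^sub>R u\<close> unfolding Mv by (simp add: algebra_simps)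
    show "(a * lambda_min Z - l) * (x \<bullet> x) \<le> x \<bullet> ((a *\<^sub>R Z - l *\<^sub>R mat 1) *v x)" for x
      using mult_left_mono[OF lambda_min_rayleigh(2)[OF assms(1), of x], of a] assms(2)
      unfolding Mv by (simp add: inner_diff_right algebra_simps)
  qed
qed

lemma lambda_min_mult_norm_le:
  fixes M :: "real^'d^'d"
  assumes "symmetric_mat M"
  shows "lambda_min M * norm x \<le> norm (M *v x)"
proof (cases "x = 0")
  case False
  have "(lambda_min M * norm x) * norm x = lambda_min M * (x \<bullet> x)"
    by (simp add: power2_norm_eq_inner[symmetric] power2_eq_square)
  also have "\<dots> \<le> x \<bullet> (M *v x)" by (rule lambda_min_rayleigh(2)[OF assms])
  also have "\<dots> \<le> norm (M *v x) * norm x"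
    using norm_cauchy_schwarz[of x "M *v x"] by (simp add: mult.commute)
  finally show ?thesis using False by (simp add: mult_right_le_imp_le)
qed simp

lemma lambda_min_eq_0_if_eigenvalues_0:
  fixes D :: "real^'d^'d"
  assumes "symmetric_mat D" "eigenvalues_mat D \<subseteq> {0}"
  shows "lambda_min D = 0"
proof -
  obtain u where "norm u = 1" "D *v u = lambda_min D *\<^sub>R u"
    using lambda_min_rayleigh(1)[OF assms(1)] by blast
  moreover have "u \<noteq> 0" using \<open>norm u = 1\<close> by auto
  ultimately have "lambda_min D \<in> eigenvalues_mat D"
    unfolding eigenvalues_mat_def by blast
  then show ?thesis using assms(2) by blast
qed

lemma symmetric_mat_eq_0_if_eigenvalues_0:
  fixes D :: "real^'d^'d"
  assumes "symmetric_mat D" "eigenvalues_mat D \<subseteq> {0}"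
  shows "D = 0"
proof -
  have neg: "(- D) *v x = - (D *v x)" for x
    by (simp add: matrix_vector_mult_def vec_eq_iff sum_negf)
  have "eigenvalues_mat (- D) \<subseteq> {0}"
  proof
    fix c assume "c \<in> eigenvalues_mat (- D)"
    then obtain x where x: "x \<noteq> 0" "- (D *v x) = c *\<^sub>R x"
      unfolding eigenvalues_mat_def by (auto simp: neg)
    then have "D *v x = (- c) *\<^sub>R x" by (metis minus_minus scaleR_minus_left)
    with x(1) have "- c \<in> eigenvalues_mat D" unfolding eigenvalues_mat_def by blast
    then show "c \<in> {0}" using assms(2) by auto
  qed
  then have "lambda_min (- D) = 0"
    by (rule lambda_min_eq_0_if_eigenvalues_0[OF symmetric_mat_uminus[OF assms(1)]])
  then have le: "x \<bullet> (D *v x) \<le> 0" for x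
    using lambda_min_rayleigh(2)[OF symmetric_mat_uminus[OF assms(1)], of x] by (simp add: neg)
  have ge: "0 \<le> x \<bullet> (D *v x)" for x
    using lambda_min_rayleigh(2)[OF assms(1), of x] lambda_min_eq_0_if_eigenvalues_0[OF assms]
    by simp
  have "psd D" using assms(1) ge unfolding psd_def by blast
  then have "D *v x = 0 *v x" for x
    using psd_quadratic_form_eq_0_imp le[of x] ge[of x] by simp
  then show ?thesis using matrix_eq by blast
qed

lemma psd_square_eq_imp_eq:
  fixes B N :: "real^'d^'d"
  assumes B: "psd B" and N: "psd N" and sq: "B ** B = N ** N"
  shows "B = N"
proof -
  have Bs: "symmetric_mat B" and Ns: "symmetric_mat N" using B N unfolding psd_def by auto
  have "B - N = 0"
  proof (rule symmetric_mat_eq_0_if_eigenvalues_0[OF symmetric_mat_diff[OF Bs Ns]], rule subsetI)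
    fix \<mu> assume "\<mu> \<in> eigenvalues_mat (B - N)"
    then obtain u where "u \<noteq> 0" and Du: "B *v u - N *v u = \<mu> *\<^sub>R u"
      unfolding eigenvalues_mat_def by (auto simp: matrix_vector_mult_diff_rdistrib)
    \<comment> \<open>B^2 - N^2 = B (B - N) + (B - N) N, evaluated in the form at the eigenvector u\<close>
    have "0 = u \<bullet> (B *v (B *v u)) - u \<bullet> (N *v (N *v u))"
      using sq by (simp add: matrix_vector_mul_assoc)
    also have "\<dots> = u \<bullet> (B *v (B *v u - N *v u)) + (B *v u - N *v u) \<bullet> (N *v u)"
      by (simp add: inner_diff_left inner_diff_right matrix_vector_mult_diff_distrib
          symmetric_mat_inner_commute[OF Ns] symmetric_mat_inner_commute[OF Bs])
    also have "\<dots> = \<mu> * (u \<bullet> (B *v u) + u \<bullet> (N *v u))"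
      unfolding Du by (simp add: matrix_vector_mult_scaleR algebra_simps
          symmetric_mat_inner_commute[OF Bs] inner_commute)
    finally have "\<mu> = 0 \<or> u \<bullet> (B *v u) + u \<bullet> (N *v u) = 0" by simp
    moreover have "0 \<le> u \<bullet> (B *v u)" "0 \<le> u \<bullet> (N *v u)" using B N unfolding psd_def by auto
    ultimately have "\<mu> = 0 \<or> (B *v u = 0 \<and> N *v u = 0)"
      using psd_quadratic_form_eq_0_imp[OF B] psd_quadratic_form_eq_0_imp[OF N] by fastforce
    then show "\<mu> \<in> {0}" using Du \<open>u \<noteq> 0\<close> by auto
  qed
  then show ?thesis by simp
qed

lemma psd_sqrt_square:
  fixes N :: "real^'d^'d"
  assumes "psd N"
  shows "psd_sqrt (N ** N) = N"
  unfolding psd_sqrt_def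
  using assms psd_square_eq_imp_eq by (intro the_equality) auto

lemma matrix_mul_matrix_inv:
  fixes A :: "'a::field^'n^'n"
  assumes "invertible A"
  shows "A ** matrix_inv A = mat 1" "matrix_inv A ** A = mat 1"
  using someI_ex[of "\<lambda>A'. A ** A' = mat 1 \<and> A' ** A = mat 1"] assms
  unfolding invertible_def matrix_inv_def by auto

lemma matrix_inv_unique:
  fixes A B :: "'a::field^'n^'n"
  assumes "A ** B = mat 1"
  shows "matrix_inv A = B"
proof -
  have "invertible A" using assms invertible_right_inverse by blast
  have "matrix_inv A = matrix_inv A ** (A ** B)" by (simp add: assms)
  also have "\<dots> = (matrix_inv A ** A) ** B" by (simp add: matrix_mul_assoc)
  also have "\<dots> = B" by (simp add: matrix_mul_matrix_inv \<open>invertible A\<close>)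
  finally show ?thesis .
qed

lemma pd_invertible:
  fixes M :: "real^'d^'d"
  assumes "pd M"
  shows "invertible M"
proof -
  have "M *v x = 0 \<Longrightarrow> x = 0" for x using assms unfolding pd_def by force
  then show ?thesis
    using matrix_left_invertible_ker invertible_left_inverse by blast
qed

lemma symmetric_mat_matrix_inv:
  fixes M :: "real^'d^'d"
  assumes "symmetric_mat M" "invertible M"
  shows "symmetric_mat (matrix_inv M)"
proof -
  have "M ** transpose (matrix_inv M) = transpose (matrix_inv M ** M)"
    using assms(1) unfolding symmetric_mat_def matrix_transpose_mul by simp
  also have "\<dots> = mat 1" unfolding matrix_mul_matrix_inv(2)[OF assms(2)] by (rule transpose_mat)
  finally have "matrix_inv M = transpose (matrix_inv M)" by (rule matrix_inv_unique)
  then show ?thesis unfolding symmetric_mat_def by (rule sym)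
qed

lemma matrix_inv_scaleR:
  fixes M :: "real^'d^'d"
  assumes "c \<noteq> 0" "invertible M"
  shows "matrix_inv (c *\<^sub>R M) = inverse c *\<^sub>R matrix_inv M"
  by (rule matrix_inv_unique)
    (simp add: assms matrix_mul_matrix_inv matrix_scalar_ac scalar_matrix_assoc[symmetric])

lemma pd_matrix_inv:
  fixes M :: "real^'d^'d"
  assumes "pd M"
  shows "pd (matrix_inv M)"
  unfolding pd_def
proof (intro conjI allI impI)
  show "symmetric_mat (matrix_inv M)"
    using assms pd_invertible symmetric_mat_matrix_inv unfolding pd_def by blast
  fix x :: "real^'d" assume "x \<noteq> 0"
  define y where "y = matrix_inv M *v x"
  have "M *v y = x"
    unfolding y_def by (simp add: matrix_vector_mul_assoc matrix_mul_matrix_inv pd_invertible assms)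
  then have "y \<noteq> 0" using \<open>x \<noteq> 0\<close> by auto
  then have "0 < y \<bullet> (M *v y)" using assms unfolding pd_def by blast
  with \<open>M *v y = x\<close> show "0 < x \<bullet> (matrix_inv M *v x)" by (simp add: y_def inner_commute)
qed

lemma matrix_inv_quadratic_form_ge:
  fixes P :: "real^'d^'d"
  assumes "pd P"
  shows "2 * (x \<bullet> y) - y \<bullet> (P *v y) \<le> x \<bullet> (matrix_inv P *v x)"
proof -
  define z where "z = matrix_inv P *v x"
  have Pz: "P *v z = x"
    unfolding z_def by (simp add: matrix_vector_mul_assoc matrix_mul_matrix_inv pd_invertible assms)
  have sym: "symmetric_mat P" and nonneg: "0 \<le> w \<bullet> (P *v w)" for w
    using pd_imp_psd[OF assms] unfolding psd_def by auto
  \<comment> \<open>completing the square: the left side is maximal at y = z\<close>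
  have "0 \<le> (y - z) \<bullet> (P *v (y - z))" by (rule nonneg)
  also have "\<dots> = y \<bullet> (P *v y) - 2 * (x \<bullet> y) + x \<bullet> z"
    using symmetric_mat_inner_commute[OF sym, of z y]
    by (simp add: Pz matrix_vector_mult_diff_distrib inner_diff_left inner_diff_right inner_commute)
  finally show ?thesis unfolding z_def by simp
qed

lemma pd_if_loewner_ge:
  fixes P Q :: "real^'d^'d"
  assumes "pd P" "loewner_ge Q P"
  shows "pd Q"
proof -
  have "symmetric_mat Q" "\<And>x. x \<bullet> (P *v x) \<le> x \<bullet> (Q *v x)"
    using assms symmetric_mat_add[of "Q - P" P] unfolding loewner_ge_iff pd_def by auto
  then show ?thesis using assms(1) unfolding pd_def by (meson less_le_trans)
qed

lemma loewner_ge_matrix_inv: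
  fixes P Q :: "real^'d^'d"
  assumes P: "pd P" and QP: "loewner_ge Q P"
  shows "loewner_ge (matrix_inv P) (matrix_inv Q)"
proof -
  have Q: "pd Q" using P QP by (rule pd_if_loewner_ge)
  have Ps: "symmetric_mat P" and Qs: "symmetric_mat Q" and le: "\<And>x. x \<bullet> (P *v x) \<le> x \<bullet> (Q *v x)"
    using P Q QP unfolding loewner_ge_iff pd_def by auto
  have "x \<bullet> (matrix_inv Q *v x) \<le> x \<bullet> (matrix_inv P *v x)" for x
  proof -
    define y where "y = matrix_inv Q *v x"
    have "Q *v y = x"
      unfolding y_def by (simp add: matrix_vector_mul_assoc matrix_mul_matrix_inv pd_invertible Q)
    then have "x \<bullet> (matrix_inv Q *v x) = 2 * (x \<bullet> y) - y \<bullet> (Q *v y)"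
      by (simp add: y_def inner_commute)
    also have "\<dots> \<le> 2 * (x \<bullet> y) - y \<bullet> (P *v y)" using le by simp
    also have "\<dots> \<le> x \<bullet> (matrix_inv P *v x)" by (rule matrix_inv_quadratic_form_ge[OF P])
    finally show ?thesis .
  qed
  then show ?thesis
    unfolding loewner_ge_iff
    by (simp add: symmetric_mat_diff symmetric_mat_matrix_inv pd_invertible P Q Ps Qs)
qed

lemma loewner_ge_matrix_inv_shifted_lower:
  fixes Z :: "real^'d^'d"
  assumes Z: "symmetric_mat Z" and a: "0 < a" and l: "0 \<le> l" and M: "pd (a *\<^sub>R Z - l *\<^sub>R mat 1)"
  shows "loewner_ge (matrix_inv (a *\<^sub>R Z - l *\<^sub>R mat 1)) (inverse a *\<^sub>R matrix_inv Z)"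
proof -
  have ge: "loewner_ge (a *\<^sub>R Z) (a *\<^sub>R Z - l *\<^sub>R mat 1)"
    unfolding loewner_ge_iff using l
    by (auto intro!: symmetric_mat_diff symmetric_mat_scaleR symmetric_mat_mat Z
        simp: matrix_vector_mult_diff_rdistrib scaleR_mat_vector inner_diff_right)
  have "invertible Z"
    using scalar_invertible[of "inverse a" "a *\<^sub>R Z"] pd_invertible[OF pd_if_loewner_ge[OF M ge]] a
    by simp
  then show ?thesis
    using loewner_ge_matrix_inv[OF M ge] a by (simp add: matrix_inv_scaleR)
qed

lemma loewner_ge_matrix_inv_shifted_upper:
  fixes Z :: "real^'d^'d"
  assumes Z: "pd Z" and az: "1 \<le> a * lambda_min Z" and m: "1 \<le> a * lambda_min Z - l"
  shows "loewner_ge (matrix_inv Z) (inverse (lambda_min Z) *\<^sub>R matrix_inv (a *\<^sub>R Z - l *\<^sub>R mat 1))"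
proof -
  define z where "z = lambda_min Z"
  define M where "M = a *\<^sub>R Z - l *\<^sub>R mat 1"
  have Zs: "symmetric_mat Z" using Z unfolding pd_def by simp
  have z: "0 < z" using Z pd_iff_lambda_min_pos unfolding z_def by blast
  have a: "0 < a" using zero_less_mult_pos2[of a z] az z unfolding z_def by simp
  have Mv: "x \<bullet> (M *v x) = a * (x \<bullet> (Z *v x)) - l * (x \<bullet> x)" for x
    unfolding M_def
    by (simp add: matrix_vector_mult_diff_rdistrib scaleR_mat_vector scaleR_matrix_vector_assoc[symmetric]
        inner_diff_right)
  have Ms: "symmetric_mat M"
    unfolding M_def by (intro symmetric_mat_diff symmetric_mat_scaleR symmetric_mat_mat Zs)
  have "pd M"
    unfolding pd_iff_lambda_min_pos using Ms m lambda_min_affine[OF Zs a] unfolding M_def by simp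
  have "x \<bullet> (Z *v x) \<le> z * (x \<bullet> (M *v x))" for x
  proof -
    have q: "z * (x \<bullet> x) \<le> x \<bullet> (Z *v x)"
      unfolding z_def by (rule lambda_min_rayleigh(2)[OF Zs])
    have "z * (x \<bullet> (M *v x)) - x \<bullet> (Z *v x) = (a * z - 1) * (x \<bullet> (Z *v x)) - z * l * (x \<bullet> x)"
      by (simp add: Mv algebra_simps)
    also have "\<dots> \<ge> (a * z - 1) * (z * (x \<bullet> x)) - z * l * (x \<bullet> x)"
      using mult_left_mono[OF q, of "a * z - 1"] az unfolding z_def by simp
    also have "(a * z - 1) * (z * (x \<bullet> x)) - z * l * (x \<bullet> x) = z * (x \<bullet> x) * (a * z - l - 1)"
      by (simp add: algebra_simps)
    also have "\<dots> \<ge> 0" using z m unfolding z_def by simp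
    finally show ?thesis by simp
  qed
  then have "loewner_ge (z *\<^sub>R M) Z"
    unfolding loewner_ge_iff
    by (simp add: symmetric_mat_diff symmetric_mat_scaleR Ms Zs scaleR_matrix_vector_assoc[symmetric])
  from loewner_ge_matrix_inv[OF Z this] show ?thesis
    using matrix_inv_scaleR[of z M] pd_invertible[OF \<open>pd M\<close>] z
    unfolding z_def M_def by simp
qed

lemma trace_square_symmetric:
  fixes N :: "real^'d^'d"
  assumes "symmetric_mat N"
  shows "trace (N ** N) = (\<Sum>j\<in>UNIV. N$j \<bullet> N$j)"
  using symmetric_mat_nth[OF assms]
  unfolding trace_def matrix_matrix_mult_def inner_vec_def by simp

lemma norm_matrix_vector_square_le_trace:
  fixes N :: "real^'d^'d"
  assumes "symmetric_mat N"
  shows "(norm (N *v x))\<^sup>2 \<le> trace (N ** N) * (norm x)\<^sup>2"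
proof -
  have "(norm (N *v x))\<^sup>2 = (\<Sum>j\<in>UNIV. (N$j \<bullet> x)\<^sup>2)"
    unfolding power2_norm_eq_inner inner_vec_def[of "N *v x"]
    by (simp add: matrix_vector_mul_component power2_eq_square)
  also have "\<dots> \<le> (\<Sum>j\<in>UNIV. (N$j \<bullet> N$j) * (norm x)\<^sup>2)"
  proof (rule sum_mono)
    fix j
    have "\<bar>N$j \<bullet> x\<bar>\<^sup>2 \<le> (norm (N$j) * norm x)\<^sup>2"
      by (rule power_mono[OF Cauchy_Schwarz_ineq2]) simp
    then show "(N$j \<bullet> x)\<^sup>2 \<le> (N$j \<bullet> N$j) * (norm x)\<^sup>2"
      by (simp add: power_mult_distrib power2_norm_eq_inner)
  qed
  also have "\<dots> = trace (N ** N) * (norm x)\<^sup>2"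
    by (simp add: trace_square_symmetric[OF assms] sum_distrib_right)
  finally show ?thesis .
qed

lemma one_le_lambda_min_square_trace_inv_square:
  fixes M :: "real^'d^'d"
  assumes "pd M"
  shows "1 \<le> (lambda_min M)\<^sup>2 * trace (matrix_inv M ** matrix_inv M)"
proof -
  define m where "m = lambda_min M"
  define N where "N = matrix_inv M"
  have m: "0 < m" using assms pd_iff_lambda_min_pos unfolding m_def by blast
  obtain u where u: "norm u = 1" "M *v u = m *\<^sub>R u"
    using lambda_min_rayleigh(1) assms unfolding pd_def m_def by blast
  have "u = N *v (M *v u)"
    unfolding N_def by (simp add: matrix_vector_mul_assoc matrix_mul_matrix_inv pd_invertible assms)
  then have "u = m *\<^sub>R (N *v u)" by (simp add: u(2) matrix_vector_mult_scaleR)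
  then have "(1 / m) *\<^sub>R u = (1 / m) *\<^sub>R (m *\<^sub>R (N *v u))" by (rule arg_cong)
  then have "N *v u = (1 / m) *\<^sub>R u" using m by simp
  then have "(1 / m)\<^sup>2 \<le> trace (N ** N)"
    using norm_matrix_vector_square_le_trace[of N u] u(1) pd_matrix_inv[OF assms] m
    unfolding N_def pd_def by simp
  then show ?thesis
    using m unfolding m_def[symmetric] N_def[symmetric] by (simp add: field_simps)
qed

lemma lambda_min_square_trace_inv_square_le:
  fixes M :: "real^'d^'d"
  assumes "pd M"
  shows "(lambda_min M)\<^sup>2 * trace (matrix_inv M ** matrix_inv M) \<le> real CARD('d)"
proof -
  define m where "m = lambda_min M"
  define N where "N = matrix_inv M"
  have m: "0 < m" using assms pd_iff_lambda_min_pos unfolding m_def by blast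
  have Ns: "symmetric_mat N" using pd_matrix_inv[OF assms] unfolding N_def pd_def by simp
  have row_bound: "m\<^sup>2 * (N$j \<bullet> N$j) \<le> 1" for j
  proof -
    have col: "N *v axis j 1 = N$j"
      unfolding matrix_vector_mult_basis column_def by (simp add: vec_eq_iff symmetric_mat_nth[OF Ns])
    have "M *v (N *v axis j 1) = axis j 1"
      unfolding N_def by (simp add: matrix_vector_mul_assoc matrix_mul_matrix_inv pd_invertible assms)
    then have "m * norm (N$j) \<le> 1"
      using lambda_min_mult_norm_le[of M "N$j"] assms col unfolding pd_def m_def by simp
    then have "(m * norm (N$j))\<^sup>2 \<le> 1"
      using m by (simp add: abs_le_square_iff power_le_one)
    then show ?thesis by (simp add: power_mult_distrib power2_norm_eq_inner)
  qed
  have "m\<^sup>2 * trace (N ** N) = (\<Sum>j\<in>UNIV. m\<^sup>2 * (N$j \<bullet> N$j))"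
    by (simp add: trace_square_symmetric[OF Ns] sum_distrib_left)
  also have "\<dots> \<le> (\<Sum>j\<in>(UNIV::'d set). 1)" by (rule sum_mono[OF row_bound])
  finally show ?thesis unfolding m_def N_def by simp
qed

lemma frob_outer:
  fixes P :: "real^'d^'d"
  shows "frob (outer w w) P = w \<bullet> (P *v w)"
  unfolding frob_def outer_def trace_def matrix_matrix_mult_def inner_vec_def matrix_vector_mult_def
  by (simp add: sum_distrib_left sum.swap[of "\<lambda>i k. w $ i * (w $ k * P $ k $ i)"] mult_ac)

theorem lemma4p13:
  fixes v :: "nat \<Rightarrow> real^'d" and n :: nat and Z :: "real^'d^'d"
    and \<alpha> l :: real and A :: "real^'d^'d" and i :: nat
  assumes Zsym: "symmetric_mat Z"
    and Zge: "loewner_ge Z ((1/4) *\<^sub>R mat 1)"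
    and alpha: "\<alpha> = 8 * sqrt (real CARD('d))"
    and ell_pd: "pd (\<alpha> *\<^sub>R Z - l *\<^sub>R mat 1)"
    and A_def: "A = matrix_inv (\<alpha> *\<^sub>R Z - l *\<^sub>R mat 1) ** matrix_inv (\<alpha> *\<^sub>R Z - l *\<^sub>R mat 1)"
    and trA: "trace A = 1"
    and i: "1 \<le> i" "i \<le> n"
  shows "frob (outer (v i) (v i)) (matrix_inv Z) \<le> \<alpha> * frob (outer (v i) (v i)) (psd_sqrt A)
       \<and> \<alpha> * frob (outer (v i) (v i)) (psd_sqrt A) \<le> \<alpha> * lambda_min Z * frob (outer (v i) (v i)) (matrix_inv Z)"
proof -
  define M where "M = \<alpha> *\<^sub>R Z - l *\<^sub>R mat 1"
  define z where "z = lambda_min Z"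
  define m where "m = lambda_min M"
  have a: "0 < \<alpha>" and z: "1/4 \<le> z"
    using alpha lambda_min_ge_if_loewner_ge_scalar[OF Zsym Zge] unfolding z_def by simp_all
  have Zpd: "pd Z" unfolding pd_iff_lambda_min_pos using Zsym z unfolding z_def by simp
  have m_eq: "m = \<alpha> * z - l"
    unfolding m_def z_def M_def by (rule lambda_min_affine[OF Zsym a])
  have "1 \<le> m\<^sup>2" "m\<^sup>2 \<le> real CARD('d)" "0 < m"
    using one_le_lambda_min_square_trace_inv_square[OF ell_pd]
      lambda_min_square_trace_inv_square_le[OF ell_pd] ell_pd[unfolded pd_iff_lambda_min_pos] trA
    unfolding A_def m_def M_def by simp_all
  then have m: "1 \<le> m" "m \<le> sqrt (real CARD('d))"
    using power2_le_imp_le[of 1 m] real_le_rsqrt by auto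
  have az: "2 * sqrt (real CARD('d)) \<le> \<alpha> * z" using mult_left_mono[OF z, of \<alpha>] a alpha by simp
  have "sqrt (real CARD('d)) \<ge> 1" by simp
  then have "0 \<le> l" "1 \<le> \<alpha> * z" using az m m_eq by linarith+
  then have lower: "loewner_ge (matrix_inv M) (inverse \<alpha> *\<^sub>R matrix_inv Z)"
    and upper: "loewner_ge (matrix_inv Z) (inverse z *\<^sub>R matrix_inv M)"
    using loewner_ge_matrix_inv_shifted_lower[OF Zsym a _ ell_pd]
      loewner_ge_matrix_inv_shifted_upper[OF Zpd] m m_eq
    unfolding M_def z_def by simp_all
  have "psd_sqrt A = matrix_inv M"
    unfolding A_def M_def[symmetric] by (rule psd_sqrt_square[OF pd_imp_psd[OF pd_matrix_inv]])
      (simp add: M_def ell_pd)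
  moreover have "0 < z" using z by simp
  ultimately show ?thesis
    using lower upper a unfolding loewner_ge_iff frob_outer z_def[symmetric]
    by (auto simp: scaleR_matrix_vector_assoc[symmetric] field_simps)
qed

end
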